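(* Let $(\mathcal{C},\mathcal{B},Q,S)$ be an STV election, counted by the procedure described in the context, and let $w\neq l$ be candidates. If $L_{\mathrm{basic}}(w)>U_{\mathrm{comp}}(l,w)$ (the assertion $\mathsf{AG}(w,l)$), then $l$ cannot be seated when $w$ is not seated.
   Context: An STV election is a tuple $(\mathcal{C},\mathcal{B},Q,S)$ where $\mathcal{C}$ is a finite set of candidates, $\mathcal{B}$ is a multiset of ballots (each ballot is a finite sequence of distinct candidates, in order of preference, most preferred first, not necessarily containing all candidates), $S$ is the number of seats, and $Q=\lfloor |\mathcal{B}|/(S+1)\rfloor+1$ is the quota. For a sequence $\pi$, $\mathrm{first}(\pi)$ is its first element, and for a set $X$ of candidates, $\sigma_X(\pi)$ is the subsequence of $\pi$ consisting of the elements of $X$, in their original order. Counting: every ballot starts with value $1$ and is placed in the pile of its first-ranked candidate; a candidate's tally is the total value of the ballots in its pile. A candidate is eligible if neither eliminated nor seated. In each round every eligible candidate with tally at least $Q$ is seated (gets a quota), and the ballots in its pile get a reduced transfer value (e.g. unweighted Gregory: $(V_c-Q)/|\mathcal{B}_c|$, with $V_c$ the total value and $|\mathcal{B}_c|$ the number of ballots in its pile) and move to the next-ranked eligible candidate on each ballot (or are exhausted). If no candidate reaches a quota, the eligible candidate with smallest tally is eliminated and its ballots move at their current value to their next-ranked eligible candidate (or are exhausted). Counting stops when all $S$ seats are filled or the number of eligible candidates equals the number of unfilled seats, in which case all remaining eligible candidates are seated. "Seated" covers both ways of obtaining a seat. Definitions: $L_{\mathrm{basic}}(c)=|\{\beta\in\mathcal{B}:\mathrm{first}(\beta)=c\}|$;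 $U_{\mathrm{comp}}(c,c')=|\{\beta\in\mathcal{B}:\mathrm{first}(\sigma_{\{c,c'\}}(\beta))=c\}|$, counted with multiplicity. *)

theory Defs
  imports Complex_Main
begin

text \<open>An STV election: candidates C (finite set), ballots bs (a list, i.e. a multiset
  with multiplicity, indexed by position), S seats.  A counting state is a triple
  (E, X, v): seated candidates E, eliminated candidates X, and the current value v i
  of ballot number i.\<close>

type_synonym 'c stv_state = "'c set \<times> 'c set \<times> (nat \<Rightarrow> real)"

definition quota :: "'c list list \<Rightarrow> nat \<Rightarrow> nat" where
  "quota bs S = length bs div (S + 1) + 1"

definition eligible :: "'c set \<Rightarrow> 'c set \<Rightarrow> 'c set \<Rightarrow> 'c set" where
  "eligible C E X = C - (E \<union> X)"

text \<open>The candidate in whose pile a ballot lies: its highest-ranked eligible candidate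
  (None = exhausted).\<close>
definition holder :: "'c set \<Rightarrow> 'c list \<Rightarrow> 'c option" where
  "holder El b = find (\<lambda>c. c \<in> El) b"

definition pile :: "'c set \<Rightarrow> 'c list list \<Rightarrow> 'c set \<Rightarrow> 'c set \<Rightarrow> 'c \<Rightarrow> nat set" where
  "pile C bs E X c = {i. i < length bs \<and> holder (eligible C E X) (bs ! i) = Some c}"

definition tally :: "'c set \<Rightarrow> 'c list list \<Rightarrow> 'c stv_state \<Rightarrow> 'c \<Rightarrow> real" where
  "tally C bs st c = (case st of (E, X, v) \<Rightarrow> (\<Sum>i\<in>pile C bs E X c. v i))"

definition reaching_quota :: "'c set \<Rightarrow> 'c list list \<Rightarrow> nat \<Rightarrow> 'c stv_state \<Rightarrow> 'c set" where
  "reaching_quota C bs S st = (case st of (E, X, v) \<Rightarrow>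
     {c \<in> eligible C E X. tally C bs st c \<ge> real (quota bs S)})"

text \<open>Unweighted Gregory transfer values for the ballots of the candidates in W.\<close>
definition gregory :: "'c set \<Rightarrow> 'c list list \<Rightarrow> nat \<Rightarrow> 'c stv_state \<Rightarrow> 'c set \<Rightarrow> nat \<Rightarrow> real" where
  "gregory C bs S st W = (case st of (E, X, v) \<Rightarrow> (\<lambda>i.
     (case holder (eligible C E X) (bs ! i) of
        Some c \<Rightarrow> if c \<in> W then (tally C bs st c - real (quota bs S)) / real (card (pile C bs E X c))
                  else v i
      | None \<Rightarrow> v i)))"

text \<open>stv_outcome C bs S st R: counting from state st can terminate with the set R of
  seated candidates (nondeterministic in the tie-breaking of eliminations).\<close>
inductive stv_outcome :: "'c set \<Rightarrow> 'c list list \<Rightarrow> nat \<Rightarrow> 'c stv_state \<Rightarrow> 'c set \<Rightarrow> bool"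
  for C bs S where
  filled: "card E \<ge> S \<Longrightarrow> stv_outcome C bs S (E, X, v) E"
| remaining: "card E < S \<Longrightarrow> card (eligible C E X) \<le> S - card E \<Longrightarrow>
     stv_outcome C bs S (E, X, v) (E \<union> eligible C E X)"
| seat: "card E < S \<Longrightarrow> card (eligible C E X) > S - card E \<Longrightarrow>
     reaching_quota C bs S (E, X, v) \<noteq> {} \<Longrightarrow>
     stv_outcome C bs S (E \<union> reaching_quota C bs S (E, X, v), X,
        gregory C bs S (E, X, v) (reaching_quota C bs S (E, X, v))) R \<Longrightarrow>
     stv_outcome C bs S (E, X, v) R"
| elim: "card E < S \<Longrightarrow> card (eligible C E X) > S - card E \<Longrightarrow>
     reaching_quota C bs S (E, X, v) = {} \<Longrightarrow>
     c \<in> eligible C E X \<Longrightarrow>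
     (\<forall>d \<in> eligible C E X. tally C bs (E, X, v) c \<le> tally C bs (E, X, v) d) \<Longrightarrow>
     stv_outcome C bs S (E, X \<union> {c}, v) R \<Longrightarrow>
     stv_outcome C bs S (E, X, v) R"

definition stv_initial :: "'c stv_state" where
  "stv_initial = ({}, {}, (\<lambda>_. 1))"

definition L_basic :: "'c list list \<Rightarrow> 'c \<Rightarrow> nat" where
  "L_basic bs c = length (filter (\<lambda>b. b \<noteq> [] \<and> hd b = c) bs)"

definition sigma :: "'c set \<Rightarrow> 'c list \<Rightarrow> 'c list" where
  "sigma Y b = filter (\<lambda>x. x \<in> Y) b"

definition U_comp :: "'c list list \<Rightarrow> 'c \<Rightarrow> 'c \<Rightarrow> nat" where
  "U_comp bs c c' = length (filter (\<lambda>b. sigma {c, c'} b \<noteq> [] \<and> hd (sigma {c, c'} b) = c) bs)"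

end

theory Submission
  imports Defs
begin

text \<open>While \<open>w\<close> is still in the count, every ballot with first preference \<open>w\<close> lies in
  \<open>w\<close>'s pile at its original value 1, so \<open>w\<close>'s tally is at least \<open>L_basic w\<close>; every ballot in
  \<open>l\<close>'s pile ranks \<open>l\<close> above \<open>w\<close> and transfer values never exceed 1, so \<open>l\<close>'s tally is at
  most \<open>U_comp l w\<close>.  Hence \<open>l\<close>'s tally stays strictly below \<open>w\<close>'s: \<open>l\<close> cannot reach a quota
  in a round in which \<open>w\<close> does not, and \<open>w\<close> cannot be eliminated while \<open>l\<close> is still in the
  count.  So "\<open>l\<close> seated implies \<open>w\<close> seated, and \<open>w\<close> eliminated implies \<open>l\<close> eliminated" is
  an invariant of every count.\<close>

lemma holder_Cons_eligible: "c \<in> El \<Longrightarrow> holder El (c # b) = Some c"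
  by (simp add: holder_def)

lemma find_Some_hd_sigma:
  assumes "find P b = Some l" and "P w"
  shows "sigma {l, w} b \<noteq> [] \<and> hd (sigma {l, w} b) = l"
  using assms
proof (induction b)
  case (Cons x b)
  have "P l" using Cons.prems(1) by (metis find_Some_iff)
  then show ?case using Cons by (auto simp: sigma_def split: if_splits)
qed simp

lemma finite_pile: "finite (pile C bs E X c)"
  unfolding pile_def by (rule finite_subset[of _ "{..<length bs}"]) auto

definition first_prefs_intact :: "'c list list \<Rightarrow> 'c \<Rightarrow> (nat \<Rightarrow> real) \<Rightarrow> bool" where
  "first_prefs_intact bs w v \<longleftrightarrow> (\<forall>i<length bs. bs ! i \<noteq> [] \<and> hd (bs ! i) = w \<longrightarrow> v i = 1)"

lemma tally_ge_L_basic: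
  assumes "w \<in> eligible C E X" and "first_prefs_intact bs w v" and "\<forall>i. 0 \<le> v i"
  shows "real (L_basic bs w) \<le> tally C bs (E, X, v) w"
proof -
  define A where "A = {i. i < length bs \<and> bs ! i \<noteq> [] \<and> hd (bs ! i) = w}"
  have "A \<subseteq> pile C bs E X w"
  proof
    fix i assume "i \<in> A"
    then have "i < length bs" and first: "bs ! i = w # tl (bs ! i)" unfolding A_def by auto
    moreover have "holder (eligible C E X) (bs ! i) = Some w"
      by (subst first) (rule holder_Cons_eligible[OF assms(1)])
    ultimately show "i \<in> pile C bs E X w" unfolding pile_def by simp
  qed
  then have "(\<Sum>i\<in>A. v i) \<le> (\<Sum>i\<in>pile C bs E X w. v i)"
    by (rule sum_mono2[OF finite_pile]) (simp add: assms(3))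
  moreover have "(\<Sum>i\<in>A. v i) = L_basic bs w"
    using assms(2) unfolding first_prefs_intact_def L_basic_def length_filter_conv_card A_def
    by simp
  ultimately show ?thesis unfolding tally_def by simp
qed

lemma tally_le_card_pile:
  assumes "\<forall>i. v i \<le> 1"
  shows "tally C bs (E, X, v) c \<le> real (card (pile C bs E X c))"
  using sum_bounded_above[of "pile C bs E X c" v 1] assms unfolding tally_def by simp

lemma tally_le_U_comp:
  assumes "w \<in> eligible C E X" and "\<forall>i. v i \<le> 1"
  shows "tally C bs (E, X, v) l \<le> real (U_comp bs l w)"
proof -
  define B where "B = {i. i < length bs \<and> sigma {l, w} (bs ! i) \<noteq> [] \<and> hd (sigma {l, w} (bs ! i)) = l}"
  have "pile C bs E X l \<subseteq> B"
    unfolding pile_def B_def holder_def using find_Some_hd_sigma[of _ _ l w] assms(1) by auto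
  moreover have "finite B" unfolding B_def by (rule finite_subset[of _ "{..<length bs}"]) auto
  ultimately have "card (pile C bs E X l) \<le> U_comp bs l w"
    unfolding U_comp_def length_filter_conv_card B_def by (simp add: card_mono)
  then show ?thesis using tally_le_card_pile[OF assms(2)] by (meson of_nat_le_iff order_trans)
qed

lemma tally_less_while_eligible:
  assumes "w \<in> eligible C E X" and "\<forall>i. 0 \<le> v i \<and> v i \<le> 1"
    and "first_prefs_intact bs w v" and "U_comp bs l w < L_basic bs w"
  shows "tally C bs (E, X, v) l < tally C bs (E, X, v) w"
proof -
  have "real (L_basic bs w) \<le> tally C bs (E, X, v) w"
    using assms(2) by (intro tally_ge_L_basic[OF assms(1,3)]) simp
  moreover have "tally C bs (E, X, v) l \<le> real (U_comp bs l w)"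
    using assms(2) by (intro tally_le_U_comp[OF assms(1)]) simp
  ultimately show ?thesis using assms(4) by linarith
qed

lemma gregory_keeps_value:
  assumes "holder (eligible C E X) (bs ! i) = Some c" and "c \<notin> W"
  shows "gregory C bs S (E, X, v) W i = v i"
  using assms unfolding gregory_def by simp

lemma gregory_bounded:
  assumes "\<forall>i. 0 \<le> v i \<and> v i \<le> 1" and "W \<subseteq> reaching_quota C bs S (E, X, v)"
  shows "0 \<le> gregory C bs S (E, X, v) W i \<and> gregory C bs S (E, X, v) W i \<le> 1"
proof (cases "\<exists>c \<in> W. holder (eligible C E X) (bs ! i) = Some c")
  case True
  then obtain c where "c \<in> W" and holder: "holder (eligible C E X) (bs ! i) = Some c" by blast
  let ?t = "tally C bs (E, X, v) c" and ?q = "real (quota bs S)" and ?n = "real (card (pile C bs E X c))"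
  have "?q \<le> ?t" using \<open>c \<in> W\<close> assms(2) unfolding reaching_quota_def by auto
  moreover have "?t \<le> ?n" using assms(1) by (simp add: tally_le_card_pile)
  moreover have "1 \<le> ?q" unfolding quota_def by simp
  moreover have "gregory C bs S (E, X, v) W i = (?t - ?q) / ?n"
    using \<open>c \<in> W\<close> holder unfolding gregory_def by simp
  ultimately show ?thesis by (simp add: divide_le_eq_1)
next
  case False
  then have "gregory C bs S (E, X, v) W i = v i"
    unfolding gregory_def by (auto split: option.split)
  then show ?thesis using assms(1) by simp
qed

fun dominance_invariant :: "'c set \<Rightarrow> 'c list list \<Rightarrow> 'c \<Rightarrow> 'c \<Rightarrow> 'c stv_state \<Rightarrow> bool" where
  "dominance_invariant C bs w l (E, X, v) \<longleftrightarrow>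
     (\<forall>i. 0 \<le> v i \<and> v i \<le> 1) \<and>
     (w \<in> eligible C E X \<longrightarrow> first_prefs_intact bs w v) \<and>
     (l \<in> E \<longrightarrow> w \<in> E) \<and> (w \<in> X \<longrightarrow> l \<in> X)"

lemma dominance_invariant_seat:
  fixes S :: nat
  assumes inv: "dominance_invariant C bs w l (E, X, v)"
    and "w \<in> C" and AG: "U_comp bs l w < L_basic bs w"
  defines "RQ \<equiv> reaching_quota C bs S (E, X, v)"
  shows "dominance_invariant C bs w l (E \<union> RQ, X, gregory C bs S (E, X, v) RQ)"
proof -
  have bounded: "\<forall>i. 0 \<le> v i \<and> v i \<le> 1" using inv by simp
  have "first_prefs_intact bs w (gregory C bs S (E, X, v) RQ)"
    if "w \<in> eligible C (E \<union> RQ) X"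
  proof -
    have "w \<in> eligible C E X" "w \<notin> RQ" using that unfolding eligible_def by auto
    then have "gregory C bs S (E, X, v) RQ i = v i" if "bs ! i \<noteq> []" "hd (bs ! i) = w" for i
      using that gregory_keeps_value holder_Cons_eligible by (metis list.collapse)
    then show ?thesis using inv \<open>w \<in> eligible C E X\<close> by (simp add: first_prefs_intact_def)
  qed
  moreover have "w \<in> E \<union> RQ" if "l \<in> RQ" "w \<notin> E"
  proof -
    have "l \<in> eligible C E X" "real (quota bs S) \<le> tally C bs (E, X, v) l"
      using that(1) unfolding RQ_def reaching_quota_def by auto
    then have "w \<in> eligible C E X" using inv \<open>w \<in> C\<close> \<open>w \<notin> E\<close> unfolding eligible_def by auto
    then have "tally C bs (E, X, v) l < tally C bs (E, X, v) w"
      using inv by (intro tally_less_while_eligible[OF _ _ _ AG]) auto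
    then show ?thesis
      using \<open>w \<in> eligible C E X\<close> \<open>real (quota bs S) \<le> tally C bs (E, X, v) l\<close>
      unfolding RQ_def reaching_quota_def by auto
  qed
  moreover have "\<forall>i. 0 \<le> gregory C bs S (E, X, v) RQ i \<and> gregory C bs S (E, X, v) RQ i \<le> 1"
    unfolding RQ_def using gregory_bounded[OF bounded] by blast
  ultimately show ?thesis using inv by auto
qed

lemma dominance_invariant_elim:
  assumes inv: "dominance_invariant C bs w l (E, X, v)"
    and "l \<in> C" and AG: "U_comp bs l w < L_basic bs w"
    and "c \<in> eligible C E X"
    and minimal: "\<forall>d \<in> eligible C E X. tally C bs (E, X, v) c \<le> tally C bs (E, X, v) d"
  shows "dominance_invariant C bs w l (E, X \<union> {c}, v)"
proof -
  have "l \<in> X \<union> {c}" if "w = c"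
  proof (rule ccontr)
    assume "l \<notin> X \<union> {c}"
    moreover have "w \<in> eligible C E X" using \<open>c \<in> eligible C E X\<close> \<open>w = c\<close> by simp
    ultimately have "l \<in> eligible C E X" using inv \<open>l \<in> C\<close> unfolding eligible_def by auto
    then have "tally C bs (E, X, v) w \<le> tally C bs (E, X, v) l" using minimal \<open>w = c\<close> by simp
    moreover have "tally C bs (E, X, v) l < tally C bs (E, X, v) w"
      using inv \<open>w \<in> eligible C E X\<close> by (intro tally_less_while_eligible[OF _ _ _ AG]) auto
    ultimately show False by simp
  qed
  then show ?thesis using inv by (auto simp: eligible_def)
qed

lemma stv_outcome_dominance:
  assumes "stv_outcome C bs S st R" and "dominance_invariant C bs w l st"
    and "w \<in> C" and "l \<in> C" and "U_comp bs l w < L_basic bs w" and "l \<in> R"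
  shows "w \<in> R"
  using assms
proof (induction rule: stv_outcome.induct)
  case (filled E X v)
  then show ?case by simp
next
  case (remaining E X v)
  have "l \<in> E \<longrightarrow> w \<in> E" "w \<in> X \<longrightarrow> l \<in> X" using remaining.prems(1) by simp_all
  then show ?case using remaining.prems(2,5) unfolding eligible_def by blast
next
  case (seat E X v R)
  show ?case
    using seat.IH[OF dominance_invariant_seat[OF seat.prems(1,2,4)] seat.prems(2-5)] .
next
  case (elim E X v c R)
  show ?case
    using elim.IH[OF dominance_invariant_elim[OF elim.prems(1,3,4) elim.hyps(4,5)] elim.prems(2-5)] .
qed

theorem corollary1:
  fixes C :: "'c set" and bs :: "'c list list" and S :: nat and w l :: 'c
  assumes "finite C"
    and "\<forall>b \<in> set bs. distinct b \<and> set b \<subseteq> C"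
    and "w \<in> C" and "l \<in> C" and "w \<noteq> l"
    and "L_basic bs w > U_comp bs l w"
    and "stv_outcome C bs S stv_initial R"
    and "l \<in> R"
  shows "w \<in> R"
proof -
  have "dominance_invariant C bs w l stv_initial"
    by (simp add: stv_initial_def first_prefs_intact_def)
  then show ?thesis by (rule stv_outcome_dominance[OF assms(7) _ assms(3,4,6,8)])
qed

end
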